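(* Assume $\lambda<1-\frac1d$. Let $x$ be a fluid solution such that $x_{0,0}(t)>0$ for all $t\ge0$. Then there exist $\alpha>0$ and $\beta>0$ such that $\|x(t)-x^\star\|\le\alpha e^{-\beta t}$ for all $t\ge0$, where $x^\star$ is given by $x^\star_{0,0}=1-\lambda-\frac1d$, $x^\star_{0,1}=\frac1d$, $x^\star_{1,1}=\lambda$ and $x^\star_{i,j}=0$ otherwise, and $\|\cdot\|$ is the Euclidean norm.
   Context: Fix $\lambda\in(0,1)$, an integer $d\ge2$ and an integer $I>1$. $\mathcal S=\{x=(x_{i,j})_{0\le i\le j\le I}: x_{i,j}\ge0,\ \sum_{i=0}^I\sum_{j=i}^I x_{i,j}=1\}$; $x_{i,\cdot}=\sum_{j=i}^I x_{i,j}$, $x_{\cdot,j}=\sum_{i=0}^j x_{i,j}$. For $0\le j\le I$: $\mathcal R_j(x)=\max\{0,\lambda(1-d\sum_{i=0}^j(j+1-i)x_{i,\cdot})\}\,\mathbf 1\{\sum_{i=0}^j x_{\cdot,i}=0\}$, $\mathcal G_j(x)=\lambda d\,\mathbf 1\{\sum_{i=0}^j x_{\cdot,i}=0,\ d\sum_{i=0}^j(j+1-i)x_{i,\cdot}\le1\}\sum_{i=0}^j x_{i,\cdot}$. Write $\rho_k^{a,b}(x)=\mathcal R_k(x)\frac{x_{a,b}}{x_{\cdot,b}}\mathbf 1\{x_{\cdot,b}>0\}$ (equal to $0$ when $x_{\cdot,b}=0$). The drift $b(x)$ is: $b_{0,0}=\lambda d(x_{0,\cdot}-x_{0,0})-\lambda+\mathcal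 R_0(x)$; for $i<j$: $b_{i,j}=x_{i+1,j}-\mathbf 1\{i>0\}x_{i,j}-\lambda d x_{i,j}-\rho_{j-1}^{i,j}+\mathbf 1\{i>0\}\rho_{j-2}^{i-1,j-1}+\mathbf 1\{j=I,i>0\}\rho_{I-1}^{i-1,I}$; $b_{1,1}=-x_{1,1}+\lambda d(x_{1,\cdot}-x_{1,1})+\lambda-\mathcal R_0(x)-\rho_0^{1,1}-\mathcal G_1(x)$; for $2\le i\le I-1$: $b_{i,i}=-x_{i,i}+\lambda d(x_{i,\cdot}-x_{i,i})-\rho_{i-1}^{i,i}+\rho_{i-2}^{i-1,i-1}+\mathcal G_{i-1}(x)-\mathcal G_i(x)$; $b_{I,I}=-x_{I,I}+\rho_{I-2}^{I-1,I-1}+\mathcal G_{I-1}(x)+\rho_{I-1}^{I-1,I}$. A fluid solution is an absolutely continuous $x:\mathbb R_+\to\mathcal S$ with $\dot x_{i,j}(t)=b_{i,j}(x(t))$ for a.e. $t$ and all $i\le j$. *)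

theory Defs
  imports "HOL-Analysis.Analysis"
begin

text \<open>States: x :: nat \<Rightarrow> nat \<Rightarrow> real, only the entries x i j with i \<le> j \<le> I matter.\<close>

definition in_S :: "nat \<Rightarrow> (nat \<Rightarrow> nat \<Rightarrow> real) \<Rightarrow> bool" where
  "in_S I x \<longleftrightarrow> (\<forall>j\<le>I. \<forall>i\<le>j. x i j \<ge> 0) \<and> (\<Sum>i\<le>I. \<Sum>j=i..I. x i j) = 1"

definition xrow :: "nat \<Rightarrow> (nat \<Rightarrow> nat \<Rightarrow> real) \<Rightarrow> nat \<Rightarrow> real" where
  "xrow I x i = (\<Sum>j=i..I. x i j)"

definition xcol :: "(nat \<Rightarrow> nat \<Rightarrow> real) \<Rightarrow> nat \<Rightarrow> real" where
  "xcol x j = (\<Sum>i\<le>j. x i j)"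

definition RR :: "real \<Rightarrow> nat \<Rightarrow> nat \<Rightarrow> (nat \<Rightarrow> nat \<Rightarrow> real) \<Rightarrow> nat \<Rightarrow> real" where
  "RR lam d I x j =
     (if (\<Sum>i\<le>j. xcol x i) = 0
      then max 0 (lam * (1 - real d * (\<Sum>i\<le>j. real (j + 1 - i) * xrow I x i)))
      else 0)"

definition GG :: "real \<Rightarrow> nat \<Rightarrow> nat \<Rightarrow> (nat \<Rightarrow> nat \<Rightarrow> real) \<Rightarrow> nat \<Rightarrow> real" where
  "GG lam d I x j =
     (if (\<Sum>i\<le>j. xcol x i) = 0 \<and> real d * (\<Sum>i\<le>j. real (j + 1 - i) * xrow I x i) \<le> 1
      then lam * real d * (\<Sum>i\<le>j. xrow I x i)
      else 0)"

definition rho :: "real \<Rightarrow> nat \<Rightarrow> nat \<Rightarrow> (nat \<Rightarrow> nat \<Rightarrow> real) \<Rightarrow> nat \<Rightarrow> nat \<Rightarrow> nat \<Rightarrow> real" where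
  "rho lam d I x k a b = (if xcol x b > 0 then RR lam d I x k * x a b / xcol x b else 0)"

definition drift :: "real \<Rightarrow> nat \<Rightarrow> nat \<Rightarrow> (nat \<Rightarrow> nat \<Rightarrow> real) \<Rightarrow> nat \<Rightarrow> nat \<Rightarrow> real" where
  "drift lam d I x i j =
    (if i = 0 \<and> j = 0 then
       lam * real d * (xrow I x 0 - x 0 0) - lam + RR lam d I x 0
     else if i < j then
       x (i+1) j - (if i > 0 then x i j else 0) - lam * real d * x i j
       - rho lam d I x (j-1) i j
       + (if i > 0 then rho lam d I x (j-2) (i-1) (j-1) else 0)
       + (if j = I \<and> i > 0 then rho lam d I x (I-1) (i-1) I else 0)
     else if i = 1 \<and> j = 1 then
       - x 1 1 + lam * real d * (xrow I x 1 - x 1 1) + lam - RR lam d I x 0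
       - rho lam d I x 0 1 1 - GG lam d I x 1
     else if i = j \<and> 2 \<le> i \<and> i \<le> I - 1 then
       - x i i + lam * real d * (xrow I x i - x i i) - rho lam d I x (i-1) i i
       + rho lam d I x (i-2) (i-1) (i-1) + GG lam d I x (i-1) - GG lam d I x i
     else if i = I \<and> j = I then
       - x I I + rho lam d I x (I-2) (I-1) (I-1) + GG lam d I x (I-1)
       + rho lam d I x (I-1) (I-1) I
     else 0)"

definition abs_cont_on :: "real set \<Rightarrow> (real \<Rightarrow> real) \<Rightarrow> bool" where
  "abs_cont_on S f \<longleftrightarrow>
     (\<forall>e>0. \<exists>\<delta>>0. \<forall>(n::nat) (a::nat\<Rightarrow>real) (b::nat\<Rightarrow>real).
        (\<forall>k<n. a k \<le> b k \<and> {a k..b k} \<subseteq> S) \<and>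
        (\<forall>k<n. \<forall>l<n. k \<noteq> l \<longrightarrow> {a k<..<b k} \<inter> {a l<..<b l} = {}) \<and>
        (\<Sum>k<n. b k - a k) < \<delta>
        \<longrightarrow> (\<Sum>k<n. \<bar>f (b k) - f (a k)\<bar>) < e)"

text \<open>Absolutely continuous on R_+ : absolutely continuous on every compact [0,T].\<close>
definition fluid_solution :: "real \<Rightarrow> nat \<Rightarrow> nat \<Rightarrow> (real \<Rightarrow> nat \<Rightarrow> nat \<Rightarrow> real) \<Rightarrow> bool" where
  "fluid_solution lam d I x \<longleftrightarrow>
     (\<forall>t\<ge>0. in_S I (x t)) \<and>
     (\<forall>j\<le>I. \<forall>i\<le>j. \<forall>T\<ge>0. abs_cont_on {0..T} (\<lambda>t. x t i j)) \<and>
     (AE t in lborel. t > 0 \<longrightarrow>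
        (\<forall>j\<le>I. \<forall>i\<le>j. ((\<lambda>s. x s i j) has_real_derivative drift lam d I (x t) i j) (at t)))"

definition xstar :: "real \<Rightarrow> nat \<Rightarrow> nat \<Rightarrow> nat \<Rightarrow> real" where
  "xstar lam d i j =
     (if i = 0 \<and> j = 0 then 1 - lam - 1 / real d
      else if i = 0 \<and> j = 1 then 1 / real d
      else if i = 1 \<and> j = 1 then lam
      else 0)"

definition state_dist :: "nat \<Rightarrow> (nat \<Rightarrow> nat \<Rightarrow> real) \<Rightarrow> (nat \<Rightarrow> nat \<Rightarrow> real) \<Rightarrow> real" where
  "state_dist I x y = sqrt (\<Sum>j\<le>I. \<Sum>i\<le>j. (x i j - y i j)\<^sup>2)"

end

theory Submission
  imports Defs
begin

text \<open>
  While \<open>x\<^sub>0\<^sub>,\<^sub>0 > 0\<close>, every partial column sum of the state is positive, so all the terms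
  \<open>RR\<close>, \<open>GG\<close> and \<open>rho\<close> vanish and the drift is linear and upper triangular. The
  deviation \<open>y\<close> of any entry \<open>(i, j) \<noteq> (0, 0)\<close> from \<open>x\<^sup>\<star>\<close> then solves \<open>y' = -c y + f\<close>
  with \<open>c > 0\<close>, where \<open>f\<close> is a combination of deviations of entries in lower rows or further
  to the right in the same row. Back-substitution, starting from \<open>x\<^sub>I\<^sub>,\<^sub>I' = -x\<^sub>I\<^sub>,\<^sub>I\<close>, gives
  exponential decay of all these deviations, and conservation of mass gives it for the
  corner \<open>(0, 0)\<close>.

  The comparison argument for \<open>y' = -c y + f\<close> needs that an absolutely continuous function
  with a.e. nonpositive derivative is nonincreasing. After tilting to make the derivative
  negative, this follows from Luzin's property (N): if \<open>h a < y < h b\<close>, the last point of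
  \<open>[a, b]\<close> where \<open>h\<close> takes the value \<open>y\<close> cannot be a point where \<open>h' < 0\<close>, so these last
  points lie in the exceptional null set, whose image would then contain \<open>(h a, h b)\<close>.
\<close>

section \<open>Absolutely continuous functions\<close>

definition nonoverlapping_subintervals ::
    "real set \<Rightarrow> nat \<Rightarrow> (nat \<Rightarrow> real) \<Rightarrow> (nat \<Rightarrow> real) \<Rightarrow> bool" where
  "nonoverlapping_subintervals S n a b \<longleftrightarrow>
     (\<forall>k<n. a k \<le> b k \<and> {a k..b k} \<subseteq> S) \<and>
     (\<forall>k<n. \<forall>l<n. k \<noteq> l \<longrightarrow> {a k<..<b k} \<inter> {a l<..<b l} = {})"

lemma abs_cont_on_iff:
  "abs_cont_on S f \<longleftrightarrow>
     (\<forall>e>0. \<exists>\<delta>>0. \<forall>n a b. nonoverlapping_subintervals S n a b \<and> (\<Sum>k<n. b k - a k) < \<delta>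
        \<longrightarrow> (\<Sum>k<n. \<bar>f (b k) - f (a k)\<bar>) < e)"
  unfolding abs_cont_on_def nonoverlapping_subintervals_def conj_assoc ..

lemma abs_cont_onD:
  assumes "abs_cont_on S f" "e > 0"
  shows "\<exists>\<delta>>0. \<forall>n a b. nonoverlapping_subintervals S n a b \<and> (\<Sum>k<n. b k - a k) < \<delta>
           \<longrightarrow> (\<Sum>k<n. \<bar>f (b k) - f (a k)\<bar>) < e"
  using assms unfolding abs_cont_on_iff by blast

lemma abs_cont_on_imp_continuous_on:
  assumes "abs_cont_on {a..b} g"
  shows "continuous_on {a..b} g"
  unfolding continuous_on_iff
proof (intro ballI allI impI)
  fix x e :: real assume x: "x \<in> {a..b}" and "0 < e"
  obtain \<delta> where "\<delta> > 0" and \<delta>: "\<forall>n a' b'. nonoverlapping_subintervals {a..b} n a' b' \<and>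
      (\<Sum>k<n. b' k - a' k) < \<delta> \<longrightarrow> (\<Sum>k<n. \<bar>g (b' k) - g (a' k)\<bar>) < e"
    using abs_cont_onD[OF assms \<open>0 < e\<close>] by blast
  have "dist (g y) (g x) < e" if y: "y \<in> {a..b}" "dist y x < \<delta>" for y
  proof -
    have "nonoverlapping_subintervals {a..b} (Suc 0) (\<lambda>_. min x y) (\<lambda>_. max x y)"
      using x y by (auto simp: nonoverlapping_subintervals_def)
    moreover have "(\<Sum>k<Suc 0. max x y - min x y) < \<delta>"
      using y by (auto simp: dist_real_def max_def min_def)
    ultimately have "\<bar>g (max x y) - g (min x y)\<bar> < e"
      using \<delta>[rule_format, of "Suc 0" "\<lambda>_. min x y" "\<lambda>_. max x y"] by simp
    then show ?thesis
      by (cases "x \<le> y") (simp_all add: dist_real_def max_def min_def abs_minus_commute)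
  qed
  with \<open>\<delta> > 0\<close> show "\<exists>\<delta>>0. \<forall>y\<in>{a..b}. dist y x < \<delta> \<longrightarrow> dist (g y) (g x) < e"
    by blast
qed

lemma lipschitz_on_imp_abs_cont_on:
  assumes "L-lipschitz_on S f"
  shows "abs_cont_on S f"
  unfolding abs_cont_on_iff
proof (intro allI impI)
  fix e :: real assume "e > 0"
  have L: "L \<ge> 0" using assms by (rule lipschitz_on_nonneg)
  define \<delta> where "\<delta> = e / (L + 1)"
  have "(\<Sum>k<n. \<bar>f (b k) - f (a k)\<bar>) < e"
    if ab: "nonoverlapping_subintervals S n a b" "(\<Sum>k<n. b k - a k) < \<delta>" for n a b
  proof -
    have "(\<Sum>k<n. \<bar>f (b k) - f (a k)\<bar>) \<le> (\<Sum>k<n. (L + 1) * (b k - a k))"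
    proof (rule sum_mono)
      fix k assume "k \<in> {..<n}"
      then have "a k \<le> b k" "{a k..b k} \<subseteq> S"
        using ab(1) by (auto simp: nonoverlapping_subintervals_def)
      then have k: "a k \<le> b k" "a k \<in> S" "b k \<in> S" by auto
      have "\<bar>f (b k) - f (a k)\<bar> \<le> L * (b k - a k)"
        using lipschitz_onD[OF assms k(3,2)] k(1) by (simp add: dist_real_def)
      also have "\<dots> \<le> (L + 1) * (b k - a k)"
        using k(1) by (simp add: algebra_simps)
      finally show "\<bar>f (b k) - f (a k)\<bar> \<le> (L + 1) * (b k - a k)" .
    qed
    also have "\<dots> = (L + 1) * (\<Sum>k<n. b k - a k)"
      by (simp add: sum_distrib_left)
    also have "\<dots> < (L + 1) * \<delta>"
      using ab(2) L by simp
    also have "\<dots> = e"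
      using L by (simp add: \<delta>_def)
    finally show ?thesis .
  qed
  moreover have "\<delta> > 0" using \<open>e > 0\<close> L by (simp add: \<delta>_def)
  ultimately show "\<exists>\<delta>>0. \<forall>n a b. nonoverlapping_subintervals S n a b \<and> (\<Sum>k<n. b k - a k) < \<delta>
             \<longrightarrow> (\<Sum>k<n. \<bar>f (b k) - f (a k)\<bar>) < e"
    by blast
qed

lemma abs_cont_on_uminus:
  assumes "abs_cont_on S f" shows "abs_cont_on S (\<lambda>t. - f t)"
  using assms unfolding abs_cont_on_def by (simp add: abs_minus_commute)

lemma abs_cont_on_add:
  assumes f: "abs_cont_on S f" and g: "abs_cont_on S g"
  shows "abs_cont_on S (\<lambda>t. f t + g t)"
  unfolding abs_cont_on_iff
proof (intro allI impI)
  fix e :: real assume "e > 0"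
  then have "e/2 > 0" by simp
  obtain \<delta>1 where "\<delta>1 > 0" and \<delta>1: "\<forall>n a b. nonoverlapping_subintervals S n a b \<and>
      (\<Sum>k<n. b k - a k) < \<delta>1 \<longrightarrow> (\<Sum>k<n. \<bar>f (b k) - f (a k)\<bar>) < e/2"
    using abs_cont_onD[OF f \<open>e/2 > 0\<close>] by blast
  obtain \<delta>2 where "\<delta>2 > 0" and \<delta>2: "\<forall>n a b. nonoverlapping_subintervals S n a b \<and>
      (\<Sum>k<n. b k - a k) < \<delta>2 \<longrightarrow> (\<Sum>k<n. \<bar>g (b k) - g (a k)\<bar>) < e/2"
    using abs_cont_onD[OF g \<open>e/2 > 0\<close>] by blast
  have "(\<Sum>k<n. \<bar>f (b k) + g (b k) - (f (a k) + g (a k))\<bar>) < e"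
    if "nonoverlapping_subintervals S n a b" "(\<Sum>k<n. b k - a k) < min \<delta>1 \<delta>2" for n a b
  proof -
    have "(\<Sum>k<n. \<bar>f (b k) + g (b k) - (f (a k) + g (a k))\<bar>)
          \<le> (\<Sum>k<n. \<bar>f (b k) - f (a k)\<bar>) + (\<Sum>k<n. \<bar>g (b k) - g (a k)\<bar>)"
      unfolding sum.distrib[symmetric] by (intro sum_mono) linarith
    also have "\<dots> < e/2 + e/2"
      using that \<delta>1 \<delta>2 by (intro add_strict_mono) auto
    finally show ?thesis by simp
  qed
  moreover have "min \<delta>1 \<delta>2 > 0" using \<open>\<delta>1 > 0\<close> \<open>\<delta>2 > 0\<close> by simp
  ultimately show "\<exists>\<delta>>0. \<forall>n a b. nonoverlapping_subintervals S n a b \<and> (\<Sum>k<n. b k - a k) < \<delta>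
          \<longrightarrow> (\<Sum>k<n. \<bar>f (b k) + g (b k) - (f (a k) + g (a k))\<bar>) < e"
    by blast
qed

lemma abs_cont_on_mult:
  assumes f: "abs_cont_on {a..b} f" and g: "abs_cont_on {a..b} g"
  shows "abs_cont_on {a..b} (\<lambda>t. f t * g t)"
  unfolding abs_cont_on_iff
proof (intro allI impI)
  fix e :: real assume "e > 0"
  have "compact (f ` {a..b})" "compact (g ` {a..b})"
    using f g by (auto intro: compact_continuous_image abs_cont_on_imp_continuous_on)
  then obtain M1 M2 where M1: "\<forall>y\<in>f ` {a..b}. \<bar>y\<bar> \<le> M1" and M2: "\<forall>y\<in>g ` {a..b}. \<bar>y\<bar> \<le> M2"
    by (meson compact_imp_bounded bounded_real)
  define M where "M = max 1 (max M1 M2)"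
  have "M > 0" by (simp add: M_def)
  have M: "\<bar>f t\<bar> \<le> M \<and> \<bar>g t\<bar> \<le> M" if "t \<in> {a..b}" for t
    using M1 M2 that unfolding M_def by (simp add: le_max_iff_disj)
  define e' where "e' = e / (2 * M)"
  have "e' > 0" using \<open>e > 0\<close> \<open>M > 0\<close> by (simp add: e'_def)
  obtain \<delta>1 where "\<delta>1 > 0" and \<delta>1: "\<forall>n a' b'. nonoverlapping_subintervals {a..b} n a' b' \<and>
      (\<Sum>k<n. b' k - a' k) < \<delta>1 \<longrightarrow> (\<Sum>k<n. \<bar>f (b' k) - f (a' k)\<bar>) < e'"
    using abs_cont_onD[OF f \<open>e' > 0\<close>] by blast
  obtain \<delta>2 where "\<delta>2 > 0" and \<delta>2: "\<forall>n a' b'. nonoverlapping_subintervals {a..b} n a' b' \<and>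
      (\<Sum>k<n. b' k - a' k) < \<delta>2 \<longrightarrow> (\<Sum>k<n. \<bar>g (b' k) - g (a' k)\<bar>) < e'"
    using abs_cont_onD[OF g \<open>e' > 0\<close>] by blast
  have "(\<Sum>k<n. \<bar>f (b' k) * g (b' k) - f (a' k) * g (a' k)\<bar>) < e"
    if ab: "nonoverlapping_subintervals {a..b} n a' b'" "(\<Sum>k<n. b' k - a' k) < min \<delta>1 \<delta>2"
    for n a' b'
  proof -
    have "(\<Sum>k<n. \<bar>f (b' k) * g (b' k) - f (a' k) * g (a' k)\<bar>)
          \<le> (\<Sum>k<n. M * \<bar>g (b' k) - g (a' k)\<bar> + M * \<bar>f (b' k) - f (a' k)\<bar>)"
    proof (rule sum_mono)
      fix k assume "k \<in> {..<n}"
      then have k: "a' k \<in> {a..b}" "b' k \<in> {a..b}"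
        using ab(1) unfolding nonoverlapping_subintervals_def by auto
      have "f (b' k) * g (b' k) - f (a' k) * g (a' k)
            = f (b' k) * (g (b' k) - g (a' k)) + g (a' k) * (f (b' k) - f (a' k))"
        by (simp add: algebra_simps)
      also have "\<bar>\<dots>\<bar> \<le> M * \<bar>g (b' k) - g (a' k)\<bar> + M * \<bar>f (b' k) - f (a' k)\<bar>"
        using M[OF k(1)] M[OF k(2)]
        by (intro order_trans[OF abs_triangle_ineq] add_mono) (auto simp: abs_mult intro!: mult_right_mono)
      finally show "\<bar>f (b' k) * g (b' k) - f (a' k) * g (a' k)\<bar>
          \<le> M * \<bar>g (b' k) - g (a' k)\<bar> + M * \<bar>f (b' k) - f (a' k)\<bar>" .
    qed
    also have "\<dots> = M * (\<Sum>k<n. \<bar>g (b' k) - g (a' k)\<bar>) + M * (\<Sum>k<n. \<bar>f (b' k) - f (a' k)\<bar>)"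
      by (simp add: sum.distrib sum_distrib_left)
    also have "\<dots> < M * e' + M * e'"
      using ab \<delta>1 \<delta>2 \<open>M > 0\<close> by (intro add_strict_mono mult_strict_left_mono) auto
    also have "\<dots> = e" using \<open>M > 0\<close> by (simp add: e'_def)
    finally show ?thesis .
  qed
  moreover have "min \<delta>1 \<delta>2 > 0" using \<open>\<delta>1 > 0\<close> \<open>\<delta>2 > 0\<close> by simp
  ultimately show "\<exists>\<delta>>0. \<forall>n a' b'. nonoverlapping_subintervals {a..b} n a' b' \<and> (\<Sum>k<n. b' k - a' k) < \<delta>
          \<longrightarrow> (\<Sum>k<n. \<bar>f (b' k) * g (b' k) - f (a' k) * g (a' k)\<bar>) < e"
    by blast
qed

lemma abs_cont_on_exp:
  fixes c K :: real
  shows "abs_cont_on {a..b} (\<lambda>t. K * exp (c * t))"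
proof (rule lipschitz_on_imp_abs_cont_on[OF lipschitz_onI])
  let ?B = "\<bar>K * c\<bar> * max (exp (c * a)) (exp (c * b))"
  show "0 \<le> ?B" by (intro mult_nonneg_nonneg) (auto simp: le_max_iff_disj)
  fix s t assume st: "s \<in> {a..b}" "t \<in> {a..b}"
  have "norm (K * exp (c * s) - K * exp (c * t)) \<le> ?B * norm (s - t)"
  proof (rule field_differentiable_bound[OF convex_real_interval(5) _ _ st])
    fix z assume z: "z \<in> {a..b}"
    show "((\<lambda>t. K * exp (c * t)) has_field_derivative K * c * exp (c * z)) (at z within {a..b})"
      by (auto intro!: derivative_eq_intros)
    have "exp (c * z) \<le> max (exp (c * a)) (exp (c * b))"
    proof (cases "c \<ge> 0")
      case True
      then have "c * z \<le> c * b" using z by (simp add: mult_left_mono)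
      then show ?thesis by (simp add: le_max_iff_disj)
    next
      case False
      then have "c * z \<le> c * a" using z by (simp add: mult_left_mono_neg)
      then show ?thesis by (simp add: le_max_iff_disj)
    qed
    then show "norm (K * c * exp (c * z)) \<le> ?B"
      by (simp add: abs_mult mult_left_mono)
  qed
  then show "dist (K * exp (c * s)) (K * exp (c * t)) \<le> ?B * dist s t"
    by (simp add: dist_real_def)
qed

section \<open>Luzin's property (N) and monotonicity\<close>

lemma abs_cont_on_finite_familyD:
  assumes "abs_cont_on S f" "e > 0"
  shows "\<exists>\<delta>>0. \<forall>\<E> u v. finite \<E> \<and> (\<forall>K\<in>\<E>. u K \<le> v K \<and> {u K..v K} \<subseteq> S)
           \<and> pairwise (\<lambda>K L. {u K<..<v K} \<inter> {u L<..<v L} = {}) \<E> \<and> (\<Sum>K\<in>\<E>. v K - u K) < \<delta>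
           \<longrightarrow> (\<Sum>K\<in>\<E>. \<bar>f (v K) - f (u K)\<bar>) < e"
proof -
  obtain \<delta> where "\<delta> > 0" and \<delta>: "\<forall>n a b. nonoverlapping_subintervals S n a b \<and>
      (\<Sum>k<n. b k - a k) < \<delta> \<longrightarrow> (\<Sum>k<n. \<bar>f (b k) - f (a k)\<bar>) < e"
    using abs_cont_onD[OF assms] by blast
  have "(\<Sum>K\<in>\<E>. \<bar>f (v K) - f (u K)\<bar>) < e"
    if \<E>: "finite \<E>" "\<forall>K\<in>\<E>. u K \<le> v K \<and> {u K..v K} \<subseteq> S"
      "pairwise (\<lambda>K L. {u K<..<v K} \<inter> {u L<..<v L} = {}) \<E>" "(\<Sum>K\<in>\<E>. v K - u K) < \<delta>"
    for \<E> u v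
  proof -
    obtain F where F: "bij_betw F {..<card \<E>} \<E>"
      using ex_bij_betw_nat_finite[OF \<E>(1)] by (auto simp: atLeast0LessThan)
    have F_in: "F k \<in> \<E>" if "k < card \<E>" for k
      using bij_betwE[OF F] that by blast
    have F_inj: "F k \<noteq> F l" if "k < card \<E>" "l < card \<E>" "k \<noteq> l" for k l
      using bij_betw_imp_inj_on[OF F] that unfolding inj_on_def by blast
    have "nonoverlapping_subintervals S (card \<E>) (u \<circ> F) (v \<circ> F)"
      unfolding nonoverlapping_subintervals_def comp_def
    proof (rule conjI; intro allI impI)
      fix k assume "k < card \<E>"
      then show "u (F k) \<le> v (F k) \<and> {u (F k)..v (F k)} \<subseteq> S"
        using \<E>(2) F_in by blast
    next
      fix k l assume "k < card \<E>" "l < card \<E>" "k \<noteq> l"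
      then show "{u (F k)<..<v (F k)} \<inter> {u (F l)<..<v (F l)} = {}"
        using \<E>(3) F_in F_inj unfolding pairwise_def by blast
    qed
    moreover have "(\<Sum>k<card \<E>. v (F k) - u (F k)) < \<delta>"
      using \<E>(4) sum.reindex_bij_betw[OF F, of "\<lambda>K. v K - u K"] by simp
    ultimately have "(\<Sum>k<card \<E>. \<bar>f (v (F k)) - f (u (F k))\<bar>) < e"
      using \<delta>[rule_format, of "card \<E>" "u \<circ> F" "v \<circ> F"] by simp
    then show ?thesis
      using sum.reindex_bij_betw[OF F, of "\<lambda>K. \<bar>f (v K) - f (u K)\<bar>"] by simp
  qed
  with \<open>\<delta> > 0\<close> show ?thesis by blast
qed

lemma sum_subinterval_lengths_le_measure:
  assumes "finite \<E>" and intervals: "\<And>K. K \<in> \<E> \<Longrightarrow> \<exists>c d. K = {c..d}"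
    and "pairwise (\<lambda>K L. interior K \<inter> interior L = {}) \<E>"
    and sub: "\<And>K. K \<in> \<E> \<Longrightarrow> u K \<le> v K \<and> {u K..v K} \<subseteq> K"
  shows "(\<Sum>K\<in>\<E>. v K - u K) \<le> measure lebesgue (\<Union>\<E>)"
proof -
  have "(\<Sum>K\<in>\<E>. v K - u K) \<le> (\<Sum>K\<in>\<E>. measure lebesgue K)"
  proof (rule sum_mono)
    fix K assume "K \<in> \<E>"
    then obtain c d where "K = {c..d}" using intervals by blast
    then have "measure lebesgue {u K..v K} \<le> measure lebesgue K"
      using sub[OF \<open>K \<in> \<E>\<close>] by (intro measure_mono_fmeasurable) auto
    then show "v K - u K \<le> measure lebesgue K"
      using sub[OF \<open>K \<in> \<E>\<close>] by simp
  qed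
  also have "\<dots> = measure lebesgue (\<Union>\<E>)"
  proof (rule measure_negligible_finite_Union[symmetric])
    show "finite \<E>" by fact
    show "K \<in> lmeasurable" if "K \<in> \<E>" for K
      using intervals[OF that] by auto
    have "negligible (K \<inter> L)" if KL_in: "K \<in> \<E>" "L \<in> \<E>" "K \<noteq> L" for K L
    proof -
      obtain c d c' d' where KL: "K = {c..d}" "L = {c'..d'}"
        using intervals KL_in(1,2) by metis
      have "interior K \<inter> interior L = {}"
        using assms(3) KL_in unfolding pairwise_def by blast
      then have "K \<inter> L \<subseteq> {c, d, c', d'}"
        unfolding KL interior_atLeastAtMost_real by auto
      then show ?thesis by (rule negligible_subset[rotated]) auto
    qed
    then show "pairwise (\<lambda>K L. negligible (K \<inter> L)) \<E>"
      unfolding pairwise_def by blast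
  qed
  finally show ?thesis .
qed

lemma continuous_on_interval_oscillationE:
  fixes h :: "real \<Rightarrow> real"
  assumes "continuous_on {c..d} h" "c \<le> d"
  obtains u v where "c \<le> u" "u \<le> v" "v \<le> d"
    "h ` {c..d} \<subseteq> {min (h u) (h v)..max (h u) (h v)}"
proof -
  obtain p q where "p \<in> {c..d}" "q \<in> {c..d}" "\<forall>y\<in>{c..d}. h p \<le> h y \<and> h y \<le> h q"
    using continuous_attains_inf[OF _ _ assms(1)] continuous_attains_sup[OF _ _ assms(1)] assms(2)
    by (metis atLeastAtMost_iff compact_Icc empty_iff order_refl)
  then show ?thesis
    by (intro that[of "min p q" "max p q"]) (auto simp: min_def max_def)
qed

lemma abs_cont_on_image_lmeasurable:
  fixes h :: "real \<Rightarrow> real"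
  assumes "abs_cont_on {a..b} h" "{c..d} \<subseteq> {a..b}"
  shows "h ` {c..d} \<in> lmeasurable"
proof (rule lmeasurable_compact, rule compact_continuous_image)
  show "continuous_on {c..d} h"
    using abs_cont_on_imp_continuous_on[OF assms(1)] assms(2) by (rule continuous_on_subset)
qed simp

lemma measure_UN_le_sum_interval_lengths:
  fixes A :: "'a \<Rightarrow> real set"
  assumes "finite \<E>" and meas: "\<And>K. K \<in> \<E> \<Longrightarrow> A K \<in> lmeasurable"
    and sub: "\<And>K. K \<in> \<E> \<Longrightarrow> A K \<subseteq> {min (p K) (q K)..max (p K) (q K)}"
  shows "measure lebesgue (\<Union>K\<in>\<E>. A K) \<le> (\<Sum>K\<in>\<E>. \<bar>q K - p K\<bar>)"
proof -
  have "measure lebesgue (\<Union>K\<in>\<E>. A K) \<le> (\<Sum>K\<in>\<E>. measure lebesgue (A K))"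
    using meas by (intro measure_UNION_le[OF \<open>finite \<E>\<close>] fmeasurableD)
  also have "\<dots> \<le> (\<Sum>K\<in>\<E>. \<bar>q K - p K\<bar>)"
  proof (rule sum_mono)
    fix K assume K: "K \<in> \<E>"
    have "measure lebesgue (A K) \<le> measure lebesgue {min (p K) (q K)..max (p K) (q K)}"
      by (rule measure_mono_fmeasurable[OF sub[OF K]]) (use meas[OF K] in simp_all)
    then show "measure lebesgue (A K) \<le> \<bar>q K - p K\<bar>"
      by (simp add: max_def min_def split: if_splits)
  qed
  finally show ?thesis .
qed

lemma abs_cont_on_image_measure_smallD:
  fixes h :: "real \<Rightarrow> real"
  assumes h: "abs_cont_on {a..b} h" and "e > 0"
  shows "\<exists>\<delta>>0. \<forall>\<E>. finite \<E> \<and> (\<forall>K\<in>\<E>. \<exists>c d. K = {c..d} \<and> c \<le> d \<and> K \<subseteq> {a..b})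
           \<and> pairwise (\<lambda>K L. interior K \<inter> interior L = {}) \<E> \<and> measure lebesgue (\<Union>\<E>) < \<delta>
           \<longrightarrow> measure lebesgue (\<Union>K\<in>\<E>. h ` K) \<le> e"
proof -
  obtain \<delta> where "\<delta> > 0" and \<delta>: "\<forall>(\<E>::real set set) u v. finite \<E> \<and> (\<forall>K\<in>\<E>. u K \<le> v K \<and> {u K..v K} \<subseteq> {a..b})
      \<and> pairwise (\<lambda>K L. {u K<..<v K} \<inter> {u L<..<v L} = {}) \<E> \<and> (\<Sum>K\<in>\<E>. v K - u K) < \<delta>
      \<longrightarrow> (\<Sum>K\<in>\<E>. \<bar>h (v K) - h (u K)\<bar>) < e"
    using abs_cont_on_finite_familyD[OF h \<open>e > 0\<close>] by blast
  have "measure lebesgue (\<Union>K\<in>\<E>. h ` K) \<le> e"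
    if \<E>: "finite \<E>" "\<forall>K\<in>\<E>. \<exists>c d. K = {c..d} \<and> c \<le> d \<and> K \<subseteq> {a..b}"
      "pairwise (\<lambda>K L. interior K \<inter> interior L = {}) \<E>" "measure lebesgue (\<Union>\<E>) < \<delta>"
    for \<E>
  proof -
    have "\<exists>u v. u \<le> v \<and> {u..v} \<subseteq> K \<and> h ` K \<subseteq> {min (h u) (h v)..max (h u) (h v)}"
      if K_in: "K \<in> \<E>" for K
    proof -
      obtain c d where K: "K = {c..d}" "c \<le> d" "K \<subseteq> {a..b}"
        using \<E>(2) K_in by blast
      have "continuous_on {c..d} h"
        using abs_cont_on_imp_continuous_on[OF h] K continuous_on_subset by blast
      then show ?thesis
        unfolding K(1) by (rule continuous_on_interval_oscillationE[OF _ K(2)]) auto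
    qed
    then obtain u v where uv: "\<And>K. K \<in> \<E> \<Longrightarrow> u K \<le> v K \<and> {u K..v K} \<subseteq> K
        \<and> h ` K \<subseteq> {min (h (u K)) (h (v K))..max (h (u K)) (h (v K))}"
      by metis
    have sub: "u K \<le> v K \<and> {u K..v K} \<subseteq> K"
      and img: "h ` K \<subseteq> {min (h (u K)) (h (v K))..max (h (u K)) (h (v K))}" if "K \<in> \<E>" for K
      using uv[OF that] by blast+
    have "(\<Sum>K\<in>\<E>. v K - u K) \<le> measure lebesgue (\<Union>\<E>)"
    proof (rule sum_subinterval_lengths_le_measure[OF \<E>(1) _ \<E>(3) sub])
      show "\<exists>c d. K = {c..d}" if "K \<in> \<E>" for K
        using \<E>(2) that by blast
    qed
    with \<E>(4) have "(\<Sum>K\<in>\<E>. v K - u K) < \<delta>" by linarith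
    moreover have "pairwise (\<lambda>K L. {u K<..<v K} \<inter> {u L<..<v L} = {}) \<E>"
      unfolding pairwise_def
    proof (intro ballI impI)
      fix K L assume KL: "K \<in> \<E>" "L \<in> \<E>" "K \<noteq> L"
      have "{u K<..<v K} \<subseteq> interior K" "{u L<..<v L} \<subseteq> interior L"
        using sub KL by (metis interior_atLeastAtMost_real interior_mono)+
      moreover have "interior K \<inter> interior L = {}"
        using \<E>(3) KL unfolding pairwise_def by blast
      ultimately show "{u K<..<v K} \<inter> {u L<..<v L} = {}" by blast
    qed
    moreover have "\<forall>K\<in>\<E>. u K \<le> v K \<and> {u K..v K} \<subseteq> {a..b}"
      using sub \<E>(2) by blast
    ultimately have "(\<Sum>K\<in>\<E>. \<bar>h (v K) - h (u K)\<bar>) < e"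
      using \<delta>[rule_format, of \<E> u v] \<E>(1) by blast
    moreover have "h ` K \<in> lmeasurable" if K: "K \<in> \<E>" for K
    proof -
      obtain c d where "K = {c..d}" "K \<subseteq> {a..b}"
        using \<E>(2) K by blast
      then show ?thesis using abs_cont_on_image_lmeasurable[OF h, of c d] by simp
    qed
    then have "measure lebesgue (\<Union>K\<in>\<E>. h ` K) \<le> (\<Sum>K\<in>\<E>. \<bar>h (v K) - h (u K)\<bar>)"
      using img by (rule measure_UN_le_sum_interval_lengths[OF \<E>(1)])
    ultimately show ?thesis by linarith
  qed
  with \<open>\<delta> > 0\<close> show ?thesis by blast
qed

lemma negligible_image_abs_cont_on:
  fixes h :: "real \<Rightarrow> real"
  assumes h: "abs_cont_on {a..b} h" and N: "N \<subseteq> {a..b}" "negligible N"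
  shows "negligible (h ` N)"
  unfolding negligible_outer_le
proof (intro allI impI)
  fix e :: real assume "e > 0"
  obtain \<delta> where "\<delta> > 0" and \<delta>: "\<forall>\<E>. finite \<E> \<and> (\<forall>K\<in>\<E>. \<exists>c d. K = {c..d} \<and> c \<le> d \<and> K \<subseteq> {a..b})
      \<and> pairwise (\<lambda>K L. interior K \<inter> interior L = {}) \<E> \<and> measure lebesgue (\<Union>\<E>) < \<delta>
      \<longrightarrow> measure lebesgue (\<Union>K\<in>\<E>. h ` K) \<le> e"
    using abs_cont_on_image_measure_smallD[OF h \<open>e > 0\<close>] by blast
  have N_meas: "N \<in> lmeasurable" "measure lebesgue N = 0"
    using N(2) by (auto simp: negligible_iff_measure)
  have "N \<subseteq> cbox a b" using N(1) by simp
  obtain \<D> where "countable \<D>"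
    and \<D>: "\<And>K. K \<in> \<D> \<Longrightarrow> K \<subseteq> cbox a b \<and> K \<noteq> {} \<and> (\<exists>c d. K = cbox c d)"
    and \<D>_disj: "pairwise (\<lambda>A B. interior A \<inter> interior B = {}) \<D>"
    and "\<And>u v. cbox u v \<in> \<D> \<Longrightarrow> \<exists>n. \<forall>i \<in> Basis. v \<bullet> i - u \<bullet> i = (b \<bullet> i - a \<bullet> i)/2^n"
    and "\<And>K. \<lbrakk>K \<in> \<D>; box a b \<noteq> {}\<rbrakk> \<Longrightarrow> interior K \<noteq> {}"
    and "N \<subseteq> \<Union>\<D>" "\<Union>\<D> \<in> lmeasurable" "measure lebesgue (\<Union>\<D>) \<le> measure lebesgue N + \<delta>/2"
    by (rule measurable_outer_intervals_bounded[OF N_meas(1) \<open>N \<subseteq> cbox a b\<close> half_gt_zero[OF \<open>\<delta> > 0\<close>]])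
      blast
  have \<D>_intervals: "\<exists>c d. K = {c..d} \<and> c \<le> d \<and> K \<subseteq> {a..b}" if K: "K \<in> \<D>" for K
  proof -
    obtain c d where "K = {c..d}" "K \<subseteq> {a..b}" "K \<noteq> {}"
      using \<D>[OF K] by (auto simp: cbox_interval)
    then show ?thesis by auto
  qed
  have image_meas: "h ` K \<in> lmeasurable" if K: "K \<in> \<D>" for K
  proof -
    obtain c d where "K = {c..d}" "K \<subseteq> {a..b}"
      using \<D>_intervals[OF K] by blast
    then show ?thesis using abs_cont_on_image_lmeasurable[OF h, of c d] by simp
  qed
  have bound: "measure lebesgue (\<Union>K\<in>\<E>. h ` K) \<le> e" if \<E>: "\<E> \<subseteq> \<D>" "finite \<E>" for \<E>
  proof -
    have "measure lebesgue (\<Union>\<E>) \<le> measure lebesgue (\<Union>\<D>)"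
    proof (rule measure_mono_fmeasurable)
      show "\<Union>\<E> \<subseteq> \<Union>\<D>" using \<E>(1) by blast
      have "K \<in> sets lebesgue" if "K \<in> \<E>" for K
        using \<D>_intervals \<E>(1) that by fastforce
      then show "\<Union>\<E> \<in> sets lebesgue" using \<E>(2) by blast
    qed fact
    then have "measure lebesgue (\<Union>\<E>) < \<delta>"
      using \<open>measure lebesgue (\<Union>\<D>) \<le> measure lebesgue N + \<delta>/2\<close> N_meas(2) \<open>\<delta> > 0\<close>
      by linarith
    moreover have "\<forall>K\<in>\<E>. \<exists>c d. K = {c..d} \<and> c \<le> d \<and> K \<subseteq> {a..b}"
      using \<D>_intervals \<E>(1) by blast
    ultimately show ?thesis
      using \<delta>[rule_format, of \<E>] \<E>(2) pairwise_subset[OF \<D>_disj \<E>(1)] by blast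
  qed
  have "(\<Union>K\<in>\<D>. h ` K) \<in> lmeasurable" "measure lebesgue (\<Union>K\<in>\<D>. h ` K) \<le> e"
    using fmeasurable_UN_bound[OF \<open>countable \<D>\<close> image_meas bound]
      measure_UN_bound[OF \<open>countable \<D>\<close> image_meas bound] by auto
  moreover have "h ` N \<subseteq> (\<Union>K\<in>\<D>. h ` K)"
    using \<open>N \<subseteq> \<Union>\<D>\<close> by blast
  ultimately show "\<exists>T. h ` N \<subseteq> T \<and> T \<in> lmeasurable \<and> measure lebesgue T \<le> e"
    by blast
qed

lemma last_crossingE:
  fixes h :: "real \<Rightarrow> real"
  assumes "a \<le> b" and h: "continuous_on {a..b} h" and y: "h a < y" "y < h b"
  obtains s where "a < s" "s < b" "h s = y" "\<And>t. s < t \<Longrightarrow> t \<le> b \<Longrightarrow> y < h t"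
proof -
  define S where "S = {a..b} \<inter> h -` {y}"
  have "S \<noteq> {}"
    using IVT'[of h a y b] y \<open>a \<le> b\<close> h unfolding S_def by fastforce
  moreover have "bdd_above S"
    unfolding S_def by (auto intro: bdd_aboveI[of _ b])
  moreover have "closed S"
    unfolding S_def by (rule continuous_closed_preimage[OF h]) auto
  ultimately have "Sup S \<in> S" by (rule closed_contains_Sup)
  then have s: "a \<le> Sup S" "Sup S \<le> b" "h (Sup S) = y" unfolding S_def by auto
  have above: "y < h t" if t: "Sup S < t" "t \<le> b" for t
  proof (rule ccontr)
    assume "\<not> y < h t"
    moreover have "continuous_on {t..b} h"
      using h t s by (auto intro: continuous_on_subset)
    ultimately obtain r where r: "t \<le> r" "r \<le> b" "h r = y"
      using IVT'[of h t y b] y t by auto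
    then have "r \<in> S" using s t unfolding S_def by auto
    then have "r \<le> Sup S" using \<open>bdd_above S\<close> by (rule cSup_upper)
    then show False using r t by simp
  qed
  show ?thesis
  proof (rule that[OF _ _ s(3) above])
    show "a < Sup S" using s y by (cases "Sup S = a") auto
    show "Sup S < b" using s y by (cases "Sup S = b") auto
  qed
qed

lemma abs_cont_on_neg_deriv_imp_le:
  fixes h :: "real \<Rightarrow> real"
  assumes "a \<le> b" and h: "abs_cont_on {a..b} h" and "negligible N"
    and deriv: "\<And>t. t \<in> {a<..<b} \<Longrightarrow> t \<notin> N \<Longrightarrow> \<exists>D<0. (h has_real_derivative D) (at t)"
  shows "h b \<le> h a"
proof (rule ccontr)
  assume "\<not> h b \<le> h a"
  have "{h a<..<h b} \<subseteq> h ` (N \<inter> {a..b})"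
  proof
    fix y assume "y \<in> {h a<..<h b}"
    then obtain s where s: "a < s" "s < b" "h s = y" and above: "\<And>t. s < t \<Longrightarrow> t \<le> b \<Longrightarrow> y < h t"
      using last_crossingE[OF \<open>a \<le> b\<close> abs_cont_on_imp_continuous_on[OF h]] by auto
    have "s \<in> N"
    proof (rule ccontr)
      assume "s \<notin> N"
      then obtain D where "D < 0" "(h has_real_derivative D) (at s)"
        using deriv s by auto
      then obtain \<eta>0 where "\<eta>0 > 0" and dec: "\<And>\<eta>. 0 < \<eta> \<Longrightarrow> \<eta> < \<eta>0 \<Longrightarrow> h (s + \<eta>) < h s"
        using DERIV_neg_dec_right by blast
      define \<eta> where "\<eta> = min \<eta>0 (b - s) / 2"
      have "0 < \<eta>" "\<eta> < \<eta>0" "s + \<eta> \<le> b"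
        using \<open>\<eta>0 > 0\<close> s by (auto simp: \<eta>_def min_def field_simps)
      then show False
        using dec above[of "s + \<eta>"] s by force
    qed
    with s show "y \<in> h ` (N \<inter> {a..b})" by force
  qed
  moreover have "negligible (h ` (N \<inter> {a..b}))"
    using \<open>negligible N\<close> negligible_subset[of N "N \<inter> {a..b}"]
    by (intro negligible_image_abs_cont_on[OF h]) auto
  ultimately have "negligible (box (h a) (h b))"
    by (simp add: box_real negligible_subset)
  then have "box (h a) (h b) = {}" using negligible_interval(2) by blast
  then show False
    using \<open>\<not> h b \<le> h a\<close> by (simp add: box_real)
qed

lemma AE_lborel_negligibleE:
  assumes "AE t in lborel. P t"
  obtains N where "negligible N" "\<And>t. t \<notin> N \<Longrightarrow> P t"
proof -
  obtain N where N: "{t \<in> space lebesgue. \<not> P t} \<subseteq> N" "emeasure lebesgue N = 0"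
    "N \<in> sets lebesgue"
    using AE_E[OF AE_completion[OF assms]] by blast
  then have "negligible N"
    by (simp add: negligible_iff_null_sets null_sets_def)
  with N(1) show ?thesis by (intro that) auto
qed

lemma abs_cont_on_deriv_nonpos_imp_le:
  fixes g :: "real \<Rightarrow> real"
  assumes "a \<le> b" and g: "abs_cont_on {a..b} g"
    and deriv: "AE t in lborel. t \<in> {a<..<b} \<longrightarrow> (\<exists>D\<le>0. (g has_real_derivative D) (at t))"
  shows "g b \<le> g a"
proof -
  obtain N where "negligible N"
    and N: "\<And>t. t \<notin> N \<Longrightarrow> t \<in> {a<..<b} \<longrightarrow> (\<exists>D\<le>0. (g has_real_derivative D) (at t))"
    using AE_lborel_negligibleE[OF deriv] by blast
  have tilted: "g b - \<epsilon> * b \<le> g a - \<epsilon> * a" if "\<epsilon> > 0" for \<epsilon>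
  proof (rule abs_cont_on_neg_deriv_imp_le[OF \<open>a \<le> b\<close> _ \<open>negligible N\<close>])
    have "abs_cont_on {a..b} (\<lambda>t. - \<epsilon> * t)"
      by (rule lipschitz_on_imp_abs_cont_on[OF lipschitz_on_cmult_real[OF lipschitz_on_id]])
    from abs_cont_on_add[OF g this] show "abs_cont_on {a..b} (\<lambda>t. g t - \<epsilon> * t)"
      by simp
    fix t assume "t \<in> {a<..<b}" "t \<notin> N"
    then obtain D where "D \<le> 0" "(g has_real_derivative D) (at t)" using N by blast
    then have "((\<lambda>t. g t - \<epsilon> * t) has_real_derivative D - \<epsilon>) (at t)"
      by (auto intro!: derivative_eq_intros)
    with \<open>D \<le> 0\<close> \<open>\<epsilon> > 0\<close> show "\<exists>D<0. ((\<lambda>t. g t - \<epsilon> * t) has_real_derivative D) (at t)"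
      by (intro exI[of _ "D - \<epsilon>"]) auto
  qed
  show ?thesis
  proof (rule field_le_epsilon)
    fix e :: real assume "e > 0"
    define \<epsilon> where "\<epsilon> = e / (b - a + 1)"
    have "\<epsilon> > 0" using \<open>e > 0\<close> \<open>a \<le> b\<close> by (simp add: \<epsilon>_def)
    have "g b \<le> g a + \<epsilon> * (b - a)"
      using tilted[OF \<open>\<epsilon> > 0\<close>] by (simp add: algebra_simps)
    also have "\<epsilon> * (b - a) \<le> e"
      using \<open>e > 0\<close> \<open>a \<le> b\<close> by (simp add: \<epsilon>_def divide_le_eq algebra_simps)
    finally show "g b \<le> g a + e" by simp
  qed
qed

section \<open>Exponential decay\<close>

definition exp_decays :: "(real \<Rightarrow> real) \<Rightarrow> bool" where
  "exp_decays f \<longleftrightarrow> (\<exists>\<alpha>>0. \<exists>\<beta>>0. \<forall>t\<ge>0. \<bar>f t\<bar> \<le> \<alpha> * exp (- \<beta> * t))"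

lemma exp_decay_rate_mono:
  fixes \<alpha> \<beta> \<beta>' t :: real
  assumes "0 \<le> \<alpha>" "\<beta>' \<le> \<beta>" "0 \<le> t"
  shows "\<alpha> * exp (- \<beta> * t) \<le> \<alpha> * exp (- \<beta>' * t)"
  using assms by (intro mult_left_mono) (auto intro: mult_right_mono)

lemma exp_decays_bound:
  assumes "exp_decays g" and "\<And>t. t \<ge> 0 \<Longrightarrow> \<bar>f t\<bar> \<le> g t"
  shows "exp_decays f"
  using assms unfolding exp_decays_def by (meson abs_ge_self order_trans)

lemma exp_decays_abs: "exp_decays (\<lambda>t. \<bar>f t\<bar>) \<longleftrightarrow> exp_decays f"
  unfolding exp_decays_def by simp

lemma exp_decays_zero: "exp_decays (\<lambda>t. 0)"
  unfolding exp_decays_def by (auto intro!: exI[of _ 1])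

lemma exp_decays_add:
  assumes "exp_decays f" "exp_decays g"
  shows "exp_decays (\<lambda>t. f t + g t)"
proof -
  obtain \<alpha>1 \<beta>1 where "\<alpha>1 > 0" "\<beta>1 > 0" and f: "\<And>t. t \<ge> 0 \<Longrightarrow> \<bar>f t\<bar> \<le> \<alpha>1 * exp (- \<beta>1 * t)"
    using assms(1) unfolding exp_decays_def by blast
  obtain \<alpha>2 \<beta>2 where "\<alpha>2 > 0" "\<beta>2 > 0" and g: "\<And>t. t \<ge> 0 \<Longrightarrow> \<bar>g t\<bar> \<le> \<alpha>2 * exp (- \<beta>2 * t)"
    using assms(2) unfolding exp_decays_def by blast
  have "\<bar>f t + g t\<bar> \<le> (\<alpha>1 + \<alpha>2) * exp (- min \<beta>1 \<beta>2 * t)" if "t \<ge> 0" for t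
  proof -
    have "\<bar>f t + g t\<bar> \<le> \<alpha>1 * exp (- \<beta>1 * t) + \<alpha>2 * exp (- \<beta>2 * t)"
      using f[OF that] g[OF that] by linarith
    also have "\<dots> \<le> \<alpha>1 * exp (- min \<beta>1 \<beta>2 * t) + \<alpha>2 * exp (- min \<beta>1 \<beta>2 * t)"
      using \<open>\<alpha>1 > 0\<close> \<open>\<alpha>2 > 0\<close> that by (intro add_mono exp_decay_rate_mono) auto
    finally show ?thesis by (simp add: algebra_simps)
  qed
  moreover have "\<alpha>1 + \<alpha>2 > 0" "min \<beta>1 \<beta>2 > 0"
    using \<open>\<alpha>1 > 0\<close> \<open>\<alpha>2 > 0\<close> \<open>\<beta>1 > 0\<close> \<open>\<beta>2 > 0\<close> by auto
  ultimately show ?thesis unfolding exp_decays_def by blast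
qed

lemma exp_decays_cmult:
  assumes "exp_decays f" shows "exp_decays (\<lambda>t. c * f t)"
proof -
  obtain \<alpha> \<beta> where "\<alpha> > 0" "\<beta> > 0" and f: "\<And>t. t \<ge> 0 \<Longrightarrow> \<bar>f t\<bar> \<le> \<alpha> * exp (- \<beta> * t)"
    using assms unfolding exp_decays_def by blast
  have "\<bar>c * f t\<bar> \<le> ((\<bar>c\<bar> + 1) * \<alpha>) * exp (- \<beta> * t)" if "t \<ge> 0" for t
  proof -
    have "\<bar>c * f t\<bar> \<le> (\<bar>c\<bar> + 1) * \<bar>f t\<bar>" by (simp add: abs_mult mult_right_mono)
    also have "\<dots> \<le> (\<bar>c\<bar> + 1) * (\<alpha> * exp (- \<beta> * t))"
      using f[OF that] by (intro mult_left_mono) auto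
    finally show ?thesis by (simp add: mult.assoc)
  qed
  moreover have "(\<bar>c\<bar> + 1) * \<alpha> > 0" using \<open>\<alpha> > 0\<close> by (simp add: add_nonneg_pos)
  ultimately show ?thesis using \<open>\<beta> > 0\<close> unfolding exp_decays_def by blast
qed

lemma exp_decays_sum:
  assumes "finite A" "\<And>i. i \<in> A \<Longrightarrow> exp_decays (f i)"
  shows "exp_decays (\<lambda>t. \<Sum>i\<in>A. f i t)"
  using assms by (induction A rule: finite_induct) (auto intro: exp_decays_zero exp_decays_add)

lemma linear_ode_upper_bound:
  fixes y f :: "real \<Rightarrow> real"
  assumes "0 < \<beta>" "\<beta> < c" "A \<ge> 0"
    and y: "\<And>T. T \<ge> 0 \<Longrightarrow> abs_cont_on {0..T} y"
    and deriv: "AE t in lborel. t > 0 \<longrightarrow> (y has_real_derivative (- c * y t + f t)) (at t)"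
    and f: "\<And>t. t \<ge> 0 \<Longrightarrow> f t \<le> A * exp (- \<beta> * t)"
    and "T \<ge> 0"
  shows "y T \<le> (\<bar>y 0\<bar> + A / (c - \<beta>)) * exp (- \<beta> * T)"
proof -
  define \<gamma> where "\<gamma> = c - \<beta>"
  have "\<gamma> > 0" using \<open>\<beta> < c\<close> by (simp add: \<gamma>_def)
  \<comment> \<open>\<open>(e\<^sup>c\<^sup>t y)' = e\<^sup>c\<^sup>t f \<le> A e\<^sup>\<gamma>\<^sup>t\<close>, so subtracting a primitive of \<open>A e\<^sup>\<gamma>\<^sup>t\<close> leaves a
    nonincreasing function\<close>
  define z where "z t = exp (c * t) * y t + - (A / \<gamma>) * exp (\<gamma> * t)" for t
  have "abs_cont_on {0..T} z"
    unfolding z_def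
    using abs_cont_on_mult[OF abs_cont_on_exp[where K = 1 and c = c] y[OF \<open>T \<ge> 0\<close>]]
    by (intro abs_cont_on_add abs_cont_on_exp) simp
  moreover have "AE t in lborel. t \<in> {0<..<T} \<longrightarrow> (\<exists>D\<le>0. (z has_real_derivative D) (at t))"
    using deriv
  proof (rule AE_mp, intro AE_I2 impI)
    fix t assume "0 < t \<longrightarrow> (y has_real_derivative - c * y t + f t) (at t)" and t: "t \<in> {0<..<T}"
    then have "(y has_real_derivative - c * y t + f t) (at t)" by auto
    then have "(z has_real_derivative exp (c * t) * f t - A * exp (\<gamma> * t)) (at t)"
      unfolding z_def using \<open>\<gamma> > 0\<close> by (auto intro!: derivative_eq_intros simp: algebra_simps)
    moreover have "exp (c * t) * f t - A * exp (\<gamma> * t) \<le> 0"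
    proof -
      have "exp (c * t) * f t \<le> exp (c * t) * (A * exp (- \<beta> * t))"
        using f[of t] t by (intro mult_left_mono) auto
      also have "\<dots> = A * exp (\<gamma> * t)"
        by (simp add: \<gamma>_def exp_add[symmetric] algebra_simps)
      finally show ?thesis by simp
    qed
    ultimately show "\<exists>D\<le>0. (z has_real_derivative D) (at t)" by blast
  qed
  ultimately have "z T \<le> z 0"
    using \<open>T \<ge> 0\<close> by (rule abs_cont_on_deriv_nonpos_imp_le[rotated])
  then have "exp (c * T) * y T \<le> y 0 - A / \<gamma> + A / \<gamma> * exp (\<gamma> * T)"
    by (simp add: z_def)
  then have "y T \<le> exp (- c * T) * (y 0 - A / \<gamma> + A / \<gamma> * exp (\<gamma> * T))"
    by (simp add: exp_minus field_simps)
  also have "\<dots> = (y 0 - A / \<gamma>) * exp (- c * T) + A / \<gamma> * exp (- \<beta> * T)"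
    by (simp add: algebra_simps exp_add[symmetric] \<gamma>_def)
  also have "\<dots> \<le> \<bar>y 0\<bar> * exp (- \<beta> * T) + A / \<gamma> * exp (- \<beta> * T)"
  proof -
    have "y 0 - A / \<gamma> \<le> \<bar>y 0\<bar>"
      using divide_nonneg_pos[OF \<open>A \<ge> 0\<close> \<open>\<gamma> > 0\<close>] by linarith
    then have "(y 0 - A / \<gamma>) * exp (- c * T) \<le> \<bar>y 0\<bar> * exp (- c * T)"
      by (intro mult_right_mono) auto
    also have "\<dots> \<le> \<bar>y 0\<bar> * exp (- \<beta> * T)"
      using \<open>\<beta> < c\<close> \<open>T \<ge> 0\<close> by (intro exp_decay_rate_mono) auto
    finally show ?thesis by simp
  qed
  finally show ?thesis by (simp add: \<gamma>_def algebra_simps)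
qed

lemma exp_decays_linear_ode:
  fixes y f :: "real \<Rightarrow> real"
  assumes "c > 0"
    and y: "\<And>T. T \<ge> 0 \<Longrightarrow> abs_cont_on {0..T} y"
    and deriv: "AE t in lborel. t > 0 \<longrightarrow> (y has_real_derivative (- c * y t + f t)) (at t)"
    and "exp_decays f"
  shows "exp_decays y"
proof -
  obtain \<alpha> \<beta>0 where "\<alpha> > 0" "\<beta>0 > 0" and f0: "\<And>t. t \<ge> 0 \<Longrightarrow> \<bar>f t\<bar> \<le> \<alpha> * exp (- \<beta>0 * t)"
    using \<open>exp_decays f\<close> unfolding exp_decays_def by blast
  define \<beta> where "\<beta> = min \<beta>0 (c / 2)"
  have \<beta>: "0 < \<beta>" "\<beta> < c" using \<open>\<beta>0 > 0\<close> \<open>c > 0\<close> by (auto simp: \<beta>_def)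
  have "\<beta> \<le> \<beta>0" by (simp add: \<beta>_def)
  have f: "\<bar>f t\<bar> \<le> \<alpha> * exp (- \<beta> * t)" if "t \<ge> 0" for t
    using f0[OF that] exp_decay_rate_mono[OF less_imp_le[OF \<open>\<alpha> > 0\<close>] \<open>\<beta> \<le> \<beta>0\<close> that]
    by linarith
  define B where "B = \<bar>y 0\<bar> + \<alpha> / (c - \<beta>)"
  have "y t \<le> B * exp (- \<beta> * t)" if "t \<ge> 0" for t
    unfolding B_def using \<beta> \<open>\<alpha> > 0\<close> f
    by (intro linear_ode_upper_bound[OF _ _ _ y deriv _ that]) (auto simp: abs_le_iff)
  moreover have "- y t \<le> B * exp (- \<beta> * t)" if t: "t \<ge> 0" for t
  proof -
    have "AE t in lborel. t > 0 \<longrightarrow> ((\<lambda>t. - y t) has_real_derivative (- c * - y t + - f t)) (at t)"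
      using deriv by (rule AE_mp) (auto intro!: AE_I2 derivative_eq_intros)
    moreover have "- f s \<le> \<alpha> * exp (- \<beta> * s)" if "s \<ge> 0" for s
      using f[OF that] by linarith
    ultimately have "- y t \<le> (\<bar>- y 0\<bar> + \<alpha> / (c - \<beta>)) * exp (- \<beta> * t)"
      using \<beta> \<open>\<alpha> > 0\<close> abs_cont_on_uminus[OF y] t
      by (intro linear_ode_upper_bound[where y = "\<lambda>t. - y t" and f = "\<lambda>t. - f t"]) auto
    then show ?thesis by (simp add: B_def)
  qed
  ultimately have "\<bar>y t\<bar> \<le> B * exp (- \<beta> * t)" if "t \<ge> 0" for t
    using that by (simp add: abs_le_iff)
  moreover have "B + 1 > 0"
    using \<open>\<alpha> > 0\<close> \<beta> by (simp add: B_def add_nonneg_pos)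
  ultimately have "\<forall>t\<ge>0. \<bar>y t\<bar> \<le> (B + 1) * exp (- \<beta> * t)"
    by (smt (verit) exp_gt_zero mult_right_mono)
  with \<open>B + 1 > 0\<close> \<open>0 < \<beta>\<close> show ?thesis unfolding exp_decays_def by blast
qed

section \<open>The drift while \<open>x\<^sub>0\<^sub>,\<^sub>0\<close> is positive\<close>

context
  fixes I :: nat and X :: "nat \<Rightarrow> nat \<Rightarrow> real"
  assumes X: "in_S I X" and X00: "0 < X 0 0"
begin

lemma sum_xcol_pos:
  assumes "k \<le> I" shows "0 < (\<Sum>i\<le>k. xcol X i)"
proof -
  have "xcol X i \<ge> 0" if "i \<le> k" for i
    using X assms that unfolding in_S_def xcol_def by (auto intro!: sum_nonneg)
  then have "xcol X 0 \<le> (\<Sum>i\<le>k. xcol X i)"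
    by (intro member_le_sum) auto
  then show ?thesis using X00 by (simp add: xcol_def)
qed

lemma RR_eq_0: "k \<le> I \<Longrightarrow> RR lam d I X k = 0"
  using sum_xcol_pos unfolding RR_def by force

lemma GG_eq_0: "k \<le> I \<Longrightarrow> GG lam d I X k = 0"
  using sum_xcol_pos unfolding GG_def by force

lemma rho_eq_0: "k \<le> I \<Longrightarrow> rho lam d I X k a b = 0"
  using RR_eq_0 unfolding rho_def by simp

lemma drift_offdiag:
  assumes "i < j" "j \<le> I"
  shows "drift lam d I X i j = X (i + 1) j - ((if i > 0 then 1 else 0) + lam * real d) * X i j"
  using assms by (simp add: drift_def rho_eq_0 algebra_simps)

lemma drift_diag:
  assumes "1 \<le> i" "i < I"
  shows "drift lam d I X i i
    = - X i i + lam * real d * (\<Sum>j\<in>{Suc i..I}. X i j) + (if i = 1 then lam else 0)"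
proof -
  have "xrow I X i - X i i = (\<Sum>j\<in>{Suc i..I}. X i j)"
    unfolding xrow_def using assms by (simp add: sum.atLeast_Suc_atMost)
  then show ?thesis
    using assms by (auto simp: drift_def RR_eq_0 GG_eq_0 rho_eq_0)
qed

lemma drift_last_diag:
  assumes "1 < I" shows "drift lam d I X I I = - X I I"
proof -
  have "\<not> I \<le> I - 1" using assms by simp
  then show ?thesis using assms by (simp add: drift_def GG_eq_0 rho_eq_0)
qed

end

lemma xstar_offdiag_balance:
  assumes "i < j" "d > 0"
  shows "((if i > 0 then 1 else 0) + lam * real d) * xstar lam d i j = xstar lam d (i + 1) j"
  using assms unfolding xstar_def by auto

lemma xstar_mass:
  assumes "1 < I"
  shows "(\<Sum>i\<le>I. \<Sum>j=i..I. xstar lam d i j) = 1"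
proof -
  have "(\<Sum>i\<le>I. \<Sum>j=i..I. xstar lam d i j) = (\<Sum>i\<in>{0,1}. \<Sum>j=i..I. xstar lam d i j)"
    using assms by (intro sum.mono_neutral_right) (auto simp: xstar_def)
  also have "\<dots> = (\<Sum>j=0..I. xstar lam d 0 j) + (\<Sum>j=1..I. xstar lam d 1 j)"
    by simp
  also have "(\<Sum>j=0..I. xstar lam d 0 j) = (\<Sum>j\<in>{0,1}. xstar lam d 0 j)"
    using assms by (intro sum.mono_neutral_right) (auto simp: xstar_def)
  also have "(\<Sum>j=1..I. xstar lam d 1 j) = (\<Sum>j\<in>{1}. xstar lam d 1 j)"
    using assms by (intro sum.mono_neutral_right) (auto simp: xstar_def)
  finally show ?thesis by (simp add: xstar_def)
qed

lemma state_dist_le_sum_abs: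
  "state_dist I x y \<le> (\<Sum>j\<le>I. \<Sum>i\<le>j. \<bar>x i j - y i j\<bar>)"
proof -
  let ?P = "SIGMA j:{..I}. {..j}"
  have "state_dist I x y = L2_set (\<lambda>p. x (snd p) (fst p) - y (snd p) (fst p)) ?P"
    by (simp add: state_dist_def L2_set_def sum.Sigma split_def)
  also have "\<dots> \<le> (\<Sum>p\<in>?P. \<bar>x (snd p) (fst p) - y (snd p) (fst p)\<bar>)"
    by (rule L2_set_le_sum_abs)
  also have "\<dots> = (\<Sum>j\<le>I. \<Sum>i\<le>j. \<bar>x i j - y i j\<bar>)"
    by (simp add: sum.Sigma split_def)
  finally show ?thesis .
qed

section \<open>Convergence to the equilibrium\<close>

locale fluid_x00_pos =
  fixes lam :: real and d I :: nat and x :: "real \<Rightarrow> nat \<Rightarrow> nat \<Rightarrow> real"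
  assumes lam_pos: "0 < lam" and d_pos: "0 < d" and I_gt_1: "1 < I"
    and fluid: "fluid_solution lam d I x"
    and x00_pos: "\<And>t. 0 \<le> t \<Longrightarrow> 0 < x t 0 0"
begin

definition deviation :: "nat \<Rightarrow> nat \<Rightarrow> real \<Rightarrow> real" where
  "deviation i j t = x t i j - xstar lam d i j"

lemma in_S_at: "0 \<le> t \<Longrightarrow> in_S I (x t)"
  using fluid unfolding fluid_solution_def by blast

lemma deviation_abs_cont_on:
  assumes "i \<le> j" "j \<le> I" "0 \<le> T"
  shows "abs_cont_on {0..T} (deviation i j)"
proof -
  have "abs_cont_on {0..T} (\<lambda>t. x t i j)"
    using fluid assms unfolding fluid_solution_def by blast
  moreover have "abs_cont_on {0..T} (\<lambda>t. - xstar lam d i j)"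
    by (rule lipschitz_on_imp_abs_cont_on[OF lipschitz_on_constant])
  ultimately show ?thesis
    using abs_cont_on_add unfolding deviation_def by fastforce
qed

lemma deviation_decays_if_linear_drift:
  assumes "i \<le> j" "j \<le> I" "0 < c" "exp_decays F"
    and drift: "\<And>t. 0 < t \<Longrightarrow> drift lam d I (x t) i j = - c * deviation i j t + F t"
  shows "exp_decays (deviation i j)"
proof (rule exp_decays_linear_ode[OF \<open>0 < c\<close> deviation_abs_cont_on[OF assms(1,2)] _ \<open>exp_decays F\<close>])
  have "AE t in lborel. 0 < t \<longrightarrow>
      (\<forall>j\<le>I. \<forall>i\<le>j. ((\<lambda>s. x s i j) has_real_derivative drift lam d I (x t) i j) (at t))"
    using fluid unfolding fluid_solution_def by blast
  then have "AE t in lborel. 0 < t \<longrightarrow> ((\<lambda>s. x s i j) has_real_derivative drift lam d I (x t) i j) (at t)"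
    by (rule AE_mp) (use assms(1,2) in \<open>auto intro!: AE_I2\<close>)
  then show "AE t in lborel. 0 < t \<longrightarrow>
      (deviation i j has_real_derivative - c * deviation i j t + F t) (at t)"
    unfolding deviation_def[abs_def]
    by (rule AE_mp) (auto intro!: AE_I2 derivative_eq_intros simp: drift deviation_def)
qed

lemma deviation_decays_offdiag:
  assumes "i < j" "j \<le> I" and "exp_decays (deviation (i + 1) j)"
  shows "exp_decays (deviation i j)"
proof (rule deviation_decays_if_linear_drift[OF _ \<open>j \<le> I\<close> _ assms(3)])
  show "0 < (if i > 0 then 1 else 0) + lam * real d"
    using lam_pos d_pos by (simp add: add_nonneg_pos)
  fix t :: real assume "0 < t"
  then show "drift lam d I (x t) i j
      = - ((if i > 0 then 1 else 0) + lam * real d) * deviation i j t + deviation (i + 1) j t"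
    using drift_offdiag[OF in_S_at x00_pos] xstar_offdiag_balance[OF \<open>i < j\<close> d_pos, of lam] assms
    by (simp add: deviation_def algebra_simps)
qed (use assms in auto)

lemma deviation_decays_diag:
  assumes "1 \<le> i" "i < I" and "\<And>j. i < j \<Longrightarrow> j \<le> I \<Longrightarrow> exp_decays (deviation i j)"
  shows "exp_decays (deviation i i)"
proof (rule deviation_decays_if_linear_drift[OF order_refl _ zero_less_one])
  show "exp_decays (\<lambda>t. lam * real d * (\<Sum>j\<in>{Suc i..I}. deviation i j t))"
    using assms(3) by (intro exp_decays_cmult exp_decays_sum) auto
  fix t :: real assume "0 < t"
  have "(\<Sum>j\<in>{Suc i..I}. deviation i j t) = (\<Sum>j\<in>{Suc i..I}. x t i j)"
    using assms by (intro sum.cong) (auto simp: deviation_def xstar_def)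
  then show "drift lam d I (x t) i i
      = - 1 * deviation i i t + lam * real d * (\<Sum>j\<in>{Suc i..I}. deviation i j t)"
    using drift_diag[OF in_S_at x00_pos \<open>1 \<le> i\<close> \<open>i < I\<close>] \<open>0 < t\<close> assms
    by (simp add: deviation_def xstar_def)
qed (use assms in auto)

lemma deviation_decays_last_diag: "exp_decays (deviation I I)"
proof (rule deviation_decays_if_linear_drift[OF order_refl order_refl zero_less_one exp_decays_zero])
  fix t :: real assume "0 < t"
  then show "drift lam d I (x t) I I = - 1 * deviation I I t + 0"
    using drift_last_diag[OF in_S_at x00_pos I_gt_1] I_gt_1 by (simp add: deviation_def xstar_def)
qed

lemma deviation_decays_upper_rows:
  assumes "1 \<le> i" "i \<le> j" "j \<le> I"
  shows "exp_decays (deviation i j)"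
proof -
  have "i \<le> I" using assms by simp
  then show ?thesis
    using assms
  proof (induction i arbitrary: j rule: inc_induct)
    case base
    then show ?case using deviation_decays_last_diag by simp
  next
    case (step m)
    have m: "1 \<le> m" "m < I" using step.prems(1) step.hyps(2) by auto
    have off: "exp_decays (deviation m k)" if "m < k" "k \<le> I" for k
      using deviation_decays_offdiag[OF that] step.IH[of k] that m by simp
    show ?case
    proof (cases "m = j")
      case True
      then show ?thesis using deviation_decays_diag[OF m off] by simp
    next
      case False
      then show ?thesis using off step.prems by simp
    qed
  qed
qed

lemma deviation_decays_off_corner:
  assumes "i \<le> j" "j \<le> I" "0 < j"
  shows "exp_decays (deviation i j)"
proof (cases "i = 0")
  case True
  have "exp_decays (deviation (0 + 1) j)"
    using deviation_decays_upper_rows[of 1 j] assms by simp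
  then show ?thesis
    using deviation_decays_offdiag[of 0 j] True assms by simp
next
  case False
  then show ?thesis
    using deviation_decays_upper_rows[of i j] assms by simp
qed

lemma deviation_mass:
  assumes "0 \<le> t"
  shows "(\<Sum>i\<le>I. \<Sum>j=i..I. deviation i j t) = 0"
  using in_S_at[OF assms] xstar_mass[OF I_gt_1, of lam d]
  by (simp add: in_S_def deviation_def sum_subtractf)

lemma deviation_decays_corner: "exp_decays (deviation 0 0)"
proof (rule exp_decays_bound)
  define R where "R t = (\<Sum>j\<in>{1..I}. deviation 0 j t) + (\<Sum>i\<in>{1..I}. \<Sum>j=i..I. deviation i j t)"
    for t
  show "exp_decays (\<lambda>t. \<bar>R t\<bar>)"
    unfolding exp_decays_abs R_def
    by (intro exp_decays_add exp_decays_sum deviation_decays_off_corner) auto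
  fix t :: real assume "0 \<le> t"
  have "deviation 0 0 t + R t = 0"
    using deviation_mass[OF \<open>0 \<le> t\<close>]
    by (simp add: R_def atMost_atLeast0 sum.atLeast_Suc_atMost[OF le0, of _ I])
  then show "\<bar>deviation 0 0 t\<bar> \<le> \<bar>R t\<bar>" by simp
qed

lemma state_dist_decays: "exp_decays (\<lambda>t. state_dist I (x t) (xstar lam d))"
proof (rule exp_decays_bound)
  have "exp_decays (deviation i j)" if "i \<le> j" "j \<le> I" for i j
    using that deviation_decays_corner deviation_decays_off_corner by (cases "j = 0") auto
  then show "exp_decays (\<lambda>t. \<Sum>j\<le>I. \<Sum>i\<le>j. \<bar>deviation i j t\<bar>)"
    by (intro exp_decays_sum) (auto simp: exp_decays_abs)
  fix t :: real
  have "0 \<le> state_dist I (x t) (xstar lam d)"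
    by (simp add: state_dist_def sum_nonneg)
  then show "\<bar>state_dist I (x t) (xstar lam d)\<bar> \<le> (\<Sum>j\<le>I. \<Sum>i\<le>j. \<bar>deviation i j t\<bar>)"
    using state_dist_le_sum_abs[of I "x t" "xstar lam d"] by (simp add: deviation_def)
qed

end

theorem mainTheorem11:
  fixes lam :: real and d I :: nat and x :: "real \<Rightarrow> nat \<Rightarrow> nat \<Rightarrow> real"
  assumes "0 < lam" "lam < 1" "2 \<le> d" "1 < I"
    and "lam < 1 - 1 / real d"
    and "fluid_solution lam d I x"
    and "\<forall>t\<ge>0. x t 0 0 > 0"
  shows "\<exists>\<alpha>>0. \<exists>\<beta>>0. \<forall>t\<ge>0. state_dist I (x t) (xstar lam d) \<le> \<alpha> * exp (- \<beta> * t)"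
proof -
  interpret fluid_x00_pos lam d I x
    using assms by unfold_locales auto
  have "\<exists>\<alpha>>0. \<exists>\<beta>>0. \<forall>t\<ge>0. \<bar>state_dist I (x t) (xstar lam d)\<bar> \<le> \<alpha> * exp (- \<beta> * t)"
    using state_dist_decays unfolding exp_decays_def .
  then show ?thesis
    by (meson abs_ge_self order_trans)
qed

end
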